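(* Let $n$ be a prime and let $g<n$ be a positive integer which is a generator of $U(\mathbb Z/n\mathbb Z)$. Let $A=g\text{-}circ(a_1,\dots,a_n)$, let $\Phi(A)=(a_1,a_2,\dots,a_n)^T$ be its first row and $\Upsilon(A)=(A_{11},A_{22},\dots,A_{nn})^T$ the vector of its diagonal entries. Then $$\Upsilon(A)=Q_{n-g+1}\,\Phi(A).$$
   Context: $g\text{-}circ(a_1,\dots,a_n)$ is the $n\times n$ matrix whose $(i,j)$ entry is $a_{j-(i-1)g}$ (subscripts taken modulo $n$ in $\{1,\dots,n\}$), i.e. each row is the preceding row cyclically shifted $g$ places to the right. For an integer $h$, $Q_h$ is the $n\times n$ permutation matrix whose $(i,j)$ entry is $1$ if $j\equiv 1+(i-1)h\pmod n$ and $0$ otherwise. *)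

theory Defs
  imports "HOL-Number_Theory.Number_Theory"
begin

(* n x n matrices are functions nat => nat => 'a, indices in {1..n};
   vectors are functions nat => 'a, indices in {1..n}. *)

definition sub_mod :: "nat \<Rightarrow> int \<Rightarrow> nat" where
  "sub_mod n k = nat ((k - 1) mod int n) + 1"

definition gcirc :: "nat \<Rightarrow> nat \<Rightarrow> (nat \<Rightarrow> 'a) \<Rightarrow> nat \<Rightarrow> nat \<Rightarrow> 'a" where
  "gcirc n g a i j = a (sub_mod n (int j - (int i - 1) * int g))"

definition Qperm :: "nat \<Rightarrow> int \<Rightarrow> nat \<Rightarrow> nat \<Rightarrow> 'a::zero_neq_one" where
  "Qperm n h i j = (if [int j = 1 + (int i - 1) * h] (mod int n) then 1 else 0)"

definition mat_vec :: "nat \<Rightarrow> (nat \<Rightarrow> nat \<Rightarrow> 'a::semiring_1) \<Rightarrow> (nat \<Rightarrow> 'a) \<Rightarrow> nat \<Rightarrow> 'a" where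
  "mat_vec n M v i = (\<Sum>j = 1..n. M i j * v j)"

definition Phi :: "(nat \<Rightarrow> nat \<Rightarrow> 'a) \<Rightarrow> nat \<Rightarrow> 'a" where
  "Phi M = (\<lambda>j. M 1 j)"

definition Upsilon :: "(nat \<Rightarrow> nat \<Rightarrow> 'a) \<Rightarrow> nat \<Rightarrow> 'a" where
  "Upsilon M = (\<lambda>i. M i i)"

end

theory Submission
  imports Defs
begin

(* The diagonal entry A_ii is a_{i-(i-1)g}, while row i of Q_h selects the entry a_{1+(i-1)h};
   for h = n - g + 1 the two subscripts agree modulo n.  This works for every g and every n > 0. *)

lemma sub_mod_mem:
  assumes "n > 0"
  shows "sub_mod n k \<in> {1..n}"
proof -
  have "0 \<le> (k - 1) mod int n" "(k - 1) mod int n < int n"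
    using assms by auto
  then show ?thesis
    unfolding sub_mod_def by auto
qed

lemma sub_mod_eq_iff:
  assumes "j \<in> {1..n}"
  shows "sub_mod n k = j \<longleftrightarrow> [int j = k] (mod int n)"
proof -
  have "n > 0"
    using assms by simp
  then have "sub_mod n k = j \<longleftrightarrow> (k - 1) mod int n = int j - 1"
    unfolding sub_mod_def using assms by auto
  also have "int j - 1 = (int j - 1) mod int n"
    using assms by simp
  also have "(k - 1) mod int n = (int j - 1) mod int n \<longleftrightarrow> [int j - 1 = k - 1] (mod int n)"
    by (simp add: cong_def eq_commute)
  also have "\<dots> \<longleftrightarrow> [int j = k] (mod int n)"
    using cong_add_rcancel[of "int j - 1" 1 "k - 1" "int n"] by simp
  finally show ?thesis .
qed

lemma sub_mod_of_nat:
  assumes "j \<in> {1..n}"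
  shows "sub_mod n (int j) = j"
  using assms by (simp add: sub_mod_eq_iff)

lemma sub_mod_cong_eq:
  assumes "[k = k'] (mod int n)"
  shows "sub_mod n k = sub_mod n k'"
  using assms unfolding sub_mod_def cong_def by (metis mod_diff_cong)

lemma mat_vec_Qperm:
  assumes "n > 0"
  shows "mat_vec n (Qperm n h) v i = v (sub_mod n (1 + (int i - 1) * h))"
proof -
  define j0 where "j0 = sub_mod n (1 + (int i - 1) * h)"
  have "j0 \<in> {1..n}"
    unfolding j0_def using assms by (rule sub_mod_mem)
  have "[int j = 1 + (int i - 1) * h] (mod int n) \<longleftrightarrow> j = j0" if "j \<in> {1..n}" for j
    unfolding j0_def using sub_mod_eq_iff[OF that] by (metis (no_types))
  then have "mat_vec n (Qperm n h) v i = (\<Sum>j = 1..n. if j = j0 then v j else 0)"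
    unfolding mat_vec_def Qperm_def by (intro sum.cong) auto
  also have "\<dots> = v j0"
    using \<open>j0 \<in> {1..n}\<close> by simp
  finally show ?thesis
    by (simp add: j0_def)
qed

lemma Upsilon_gcirc:
  assumes "n > 0"
  shows "Upsilon (gcirc n g a) i = Phi (gcirc n g a) (sub_mod n (int i - (int i - 1) * int g))"
  unfolding Upsilon_def Phi_def gcirc_def
  using sub_mod_of_nat[OF sub_mod_mem[OF assms]] by simp

theorem mainTheorem8:
  fixes n g :: nat and a :: "nat \<Rightarrow> 'a::comm_ring_1"
  assumes "prime n" and "0 < g" and "g < n" and "ord n g = n - 1"
  shows "\<forall>i\<in>{1..n}. Upsilon (gcirc n g a) i
           = mat_vec n (Qperm n (int n - int g + 1)) (Phi (gcirc n g a)) i"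
proof
  fix i assume "i \<in> {1..n}"
  have "n > 0"
    using \<open>g < n\<close> by simp
  have "1 + (int i - 1) * (int n - int g + 1) = (int i - (int i - 1) * int g) + (int i - 1) * int n"
    by (simp add: algebra_simps)
  then have "[int i - (int i - 1) * int g = 1 + (int i - 1) * (int n - int g + 1)] (mod int n)"
    by (simp add: cong_def)
  then show "Upsilon (gcirc n g a) i
           = mat_vec n (Qperm n (int n - int g + 1)) (Phi (gcirc n g a)) i"
    using \<open>n > 0\<close> by (simp add: Upsilon_gcirc mat_vec_Qperm sub_mod_cong_eq)
qed

end
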